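(* Let $f: M\to N$ be a homomorphism of magmas. Then the image $f(M)$ is equidecomposable if and only if $\ker f=\{(x,y)\in M^2 : f(x)=f(y)\}$ is a closed submagma of $M^2$.
   Context: A magma is a set with a binary operation $+$; a homomorphism satisfies $f(x+y)=f(x)+f(y)$. A magma is equidecomposable if $x+y=x'+y'$ implies $x=x'$ and $y=y'$. $M^2=M\times M$ has the componentwise operation $(x,y)+(x',y')=(x+x',y+y')$. A subset $X$ of a magma is closed if $u+v\in X$ implies $u,v\in X$. *)

theory Defs
  imports Main
begin

definition magma :: "'a set \<Rightarrow> ('a \<Rightarrow> 'a \<Rightarrow> 'a) \<Rightarrow> bool" where
  "magma M add \<longleftrightarrow> (\<forall>x\<in>M. \<forall>y\<in>M. add x y \<in> M)"

definition magma_hom ::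
  "'a set \<Rightarrow> ('a \<Rightarrow> 'a \<Rightarrow> 'a) \<Rightarrow> 'b set \<Rightarrow> ('b \<Rightarrow> 'b \<Rightarrow> 'b) \<Rightarrow> ('a \<Rightarrow> 'b) \<Rightarrow> bool" where
  "magma_hom M addM N addN f \<longleftrightarrow>
     (\<forall>x\<in>M. f x \<in> N) \<and> (\<forall>x\<in>M. \<forall>y\<in>M. f (addM x y) = addN (f x) (f y))"

definition equidecomposable :: "'a set \<Rightarrow> ('a \<Rightarrow> 'a \<Rightarrow> 'a) \<Rightarrow> bool" where
  "equidecomposable S add \<longleftrightarrow>
     (\<forall>x\<in>S. \<forall>y\<in>S. \<forall>x'\<in>S. \<forall>y'\<in>S. add x y = add x' y' \<longrightarrow> x = x' \<and> y = y')"

definition prod_op :: "('a \<Rightarrow> 'a \<Rightarrow> 'a) \<Rightarrow> 'a \<times> 'a \<Rightarrow> 'a \<times> 'a \<Rightarrow> 'a \<times> 'a" where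
  "prod_op add p q = (add (fst p) (fst q), add (snd p) (snd q))"

definition submagma :: "'a set \<Rightarrow> 'a set \<Rightarrow> ('a \<Rightarrow> 'a \<Rightarrow> 'a) \<Rightarrow> bool" where
  "submagma X M add \<longleftrightarrow> X \<subseteq> M \<and> (\<forall>u\<in>X. \<forall>v\<in>X. add u v \<in> X)"

definition closed_in_magma :: "'a set \<Rightarrow> 'a set \<Rightarrow> ('a \<Rightarrow> 'a \<Rightarrow> 'a) \<Rightarrow> bool" where
  "closed_in_magma X M add \<longleftrightarrow> (\<forall>u\<in>M. \<forall>v\<in>M. add u v \<in> X \<longrightarrow> u \<in> X \<and> v \<in> X)"

definition magma_ker :: "'a set \<Rightarrow> ('a \<Rightarrow> 'b) \<Rightarrow> ('a \<times> 'a) set" where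
  "magma_ker M f = {(x, y). x \<in> M \<and> y \<in> M \<and> f x = f y}"

end

theory Submission
  imports Defs
begin

text \<open>For a homomorphism f, the pair sum (a, c) + (b, d) lies in the kernel exactly when
  f a + f b = f c + f d. Closedness of the kernel then says that such an equation forces
  f a = f c and f b = f d, which is equidecomposability of f(M); the kernel is a submagma
  of any homomorphism.\<close>

lemma prod_op_mem_magma_ker_iff:
  assumes "magma M addM" and "magma_hom M addM N addN f"
    and "a \<in> M" "b \<in> M" "c \<in> M" "d \<in> M"
  shows "prod_op addM (a, c) (b, d) \<in> magma_ker M f \<longleftrightarrow> addN (f a) (f b) = addN (f c) (f d)"
  using assms by (simp add: magma_def magma_hom_def magma_ker_def prod_op_def)

lemma magma_ker_submagma:
  assumes "magma M addM" and "magma_hom M addM N addN f"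
  shows "submagma (magma_ker M f) (M \<times> M) (prod_op addM)"
  using assms by (auto simp: submagma_def magma_def magma_hom_def magma_ker_def prod_op_def)

lemma closed_magma_ker_iff_equidecomposable_image:
  assumes "magma M addM" and "magma_hom M addM N addN f"
  shows "closed_in_magma (magma_ker M f) (M \<times> M) (prod_op addM) \<longleftrightarrow>
           equidecomposable (f ` M) addN"
proof -
  have "closed_in_magma (magma_ker M f) (M \<times> M) (prod_op addM) \<longleftrightarrow>
          (\<forall>a\<in>M. \<forall>c\<in>M. \<forall>b\<in>M. \<forall>d\<in>M. prod_op addM (a, c) (b, d) \<in> magma_ker M f \<longrightarrow>
             f a = f c \<and> f b = f d)"
    by (auto simp: closed_in_magma_def magma_ker_def)
  also have "\<dots> \<longleftrightarrow> (\<forall>a\<in>M. \<forall>c\<in>M. \<forall>b\<in>M. \<forall>d\<in>M. addN (f a) (f b) = addN (f c) (f d) \<longrightarrow>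
             f a = f c \<and> f b = f d)"
    using prod_op_mem_magma_ker_iff[OF assms] by simp
  also have "\<dots> \<longleftrightarrow> equidecomposable (f ` M) addN"
    unfolding equidecomposable_def by blast
  finally show ?thesis .
qed

theorem lemma6p3:
  fixes M :: "'a set" and addM :: "'a \<Rightarrow> 'a \<Rightarrow> 'a"
    and N :: "'b set" and addN :: "'b \<Rightarrow> 'b \<Rightarrow> 'b"
    and f :: "'a \<Rightarrow> 'b"
  assumes "magma M addM" and "magma N addN"
    and "magma_hom M addM N addN f"
  shows "equidecomposable (f ` M) addN \<longleftrightarrow>
           (submagma (magma_ker M f) (M \<times> M) (prod_op addM) \<and>
            closed_in_magma (magma_ker M f) (M \<times> M) (prod_op addM))"
  using magma_ker_submagma[OF assms(1,3)]
    closed_magma_ker_iff_equidecomposable_image[OF assms(1,3)]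
  by blast

end
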